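(* Let $K$ be any field, $n\ge 3$, $V$ an $n$-dimensional $K$-vector space, and let $X$ be a symmetric generating set of $SL(V)$ with $1\in X$ which contains a whole transvection group $t^K$. Let $$Y_1=\{x_{n^2}\cdots x_1\, t^\lambda\, x_1^{-1}\cdots x_{n^2}^{-1}\,:\,\lambda\in K,\ x_1,\ldots,x_{n^2}\in X\},$$ and assume that every edge of the transvection graph $\Gamma(Y_1)$ is two-way directed. Then $\Gamma(Y_1)$ contains a non-singular chordless cycle, i.e. there are $k\ge 3$ and pairwise distinct transvections $r_1,\ldots,r_k\in Y_1\setminus\{1\}$, $r_i=1+v_i\otimes\phi_i$, such that for $i\neq j$, $(r_i,r_j)$ is an edge if and only if $i-j\equiv\pm1\pmod k$, and $$\prod_{i=1}^k\phi_i(v_{i+1})+(-1)^{k-1}\prod_{i=1}^k\phi_{i+1}(v_i)\neq 0,$$ indices taken modulo $k$.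
   Context: A transvection is an element $1+d\otimes\phi\in SL(V)$ acting by $x\mapsto x+\phi(x)d$, with $0\ne d\in V$, $0\ne\phi\in V^*$, $\phi(d)=0$; $t^\lambda=1+\lambda d\otimes\phi$ for $t=1+d\otimes\phi$, and $t^K=\{t^\lambda:\lambda\in K\}$. For a set $Y$ of transvections, $\Gamma(Y)$ is the directed graph with vertex set $Y\setminus\{1\}$ with a directed edge $(r,s)$ from $r=1+d_1\otimes\phi_1$ to $s=1+d_2\otimes\phi_2$ iff $\phi_2(d_1)\neq 0$; an edge $(r,s)$ is two-way directed if $(s,r)$ is also an edge. The non-singularity condition does not depend on the choice of representatives $v_i,\phi_i$. *)

theory Defs
  imports "HOL-Analysis.Analysis"
begin

text \<open>V = K^n (vectors 'a^'n), linear maps = matrices 'a^'n^'n acting by *v.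
  A linear functional phi in V* is represented by a vector, acting by the standard pairing.\<close>

definition pair :: "'a::field ^'n \<Rightarrow> 'a ^'n \<Rightarrow> 'a" where
  "pair phi x = (\<Sum>i\<in>UNIV. phi $ i * x $ i)"

text \<open>d \<otimes> phi as a matrix: x \<mapsto> phi(x) d\<close>
definition tens :: "'a::field ^'n \<Rightarrow> 'a ^'n \<Rightarrow> 'a ^'n ^'n" where
  "tens d phi = (\<chi> i j. d $ i * phi $ j)"

definition SL :: "('a::field ^'n ^'n) set" where
  "SL = {A. det A = 1}"

definition transv_rep :: "'a::field ^'n ^'n \<Rightarrow> 'a ^'n \<Rightarrow> 'a ^'n \<Rightarrow> bool" where
  "transv_rep r d phi \<longleftrightarrow> d \<noteq> 0 \<and> phi \<noteq> 0 \<and> pair phi d = 0 \<and> r = mat 1 + tens d phi"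

inductive_set gen_subgroup :: "('a::field ^'n ^'n) set \<Rightarrow> ('a ^'n ^'n) set"
  for X where
  one: "mat 1 \<in> gen_subgroup X"
| gen: "x \<in> X \<Longrightarrow> x \<in> gen_subgroup X"
| mult: "a \<in> gen_subgroup X \<Longrightarrow> b \<in> gen_subgroup X \<Longrightarrow> a ** b \<in> gen_subgroup X"
| inv: "a \<in> gen_subgroup X \<Longrightarrow> matrix_inv a \<in> gen_subgroup X"

definition listprod :: "('a::field ^'n ^'n) list \<Rightarrow> 'a ^'n ^'n" where
  "listprod xs = foldr (**) xs (mat 1)"

text \<open>Edge (r,s) in Gamma(Y): r = 1 + d1 \<otimes> phi1, s = 1 + d2 \<otimes> phi2 with phi2(d1) \<noteq> 0
  (independent of the representatives).\<close>
definition tedge :: "'a::field ^'n ^'n \<Rightarrow> 'a ^'n ^'n \<Rightarrow> bool" where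
  "tedge r s \<longleftrightarrow> (\<exists>d1 phi1 d2 phi2. transv_rep r d1 phi1 \<and> transv_rep s d2 phi2 \<and> pair phi2 d1 \<noteq> 0)"

end

theory Submission
  imports Defs
begin

text \<open>
  It suffices to find a non-singular triangle t, r1, r2 in Gamma(Y1), where t = 1 + d \<otimes> phi:
  a triangle has no chords, and since edges are two-way, a non-vanishing summand of the
  non-singularity expression (a directed 3-cycle) forces all six edges.

  The vertices r = g t g^-1 = 1 + g d \<otimes> phi g^-1 are first found with g an explicit
  transvection, chosen to make the relevant polynomial in g d and phi g^-1 non-zero (for r2
  this needs n \<ge> 3). Such a polynomial is a linear functional evaluated at g (d \<otimes> phi) g^-1.
  The spans of the conjugates of d \<otimes> phi by products of k elements of X increase with k, and
  once a step adds nothing they stay constant, which happens within n^2 = dim End(V) steps.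
  As every element of SL(V) is such a product, the functional is then already non-zero at a
  conjugate by a product of n^2 elements of X, i.e. at a vertex of Gamma(Y1).
\<close>

section \<open>Rank-one matrices and transvections\<close>

lemma pair_add_left: "pair (phi + psi) x = pair phi x + pair psi x"
  by (simp add: pair_def sum.distrib distrib_right)

lemma pair_add_right: "pair phi (x + y) = pair phi x + pair phi y"
  by (simp add: pair_def sum.distrib distrib_left)

lemma pair_diff_left: "pair (phi - psi) x = pair phi x - pair psi x"
  by (simp add: pair_def sum_subtractf left_diff_distrib)

lemma pair_minus_right: "pair phi (- x) = - pair phi x"
  by (simp add: pair_def sum_negf)

lemma pair_scale_left: "pair (c *s phi) x = c * pair phi x"
  by (simp add: pair_def sum_distrib_left mult_ac)

lemma pair_scale_right: "pair phi (c *s x) = c * pair phi x"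
  by (simp add: pair_def sum_distrib_left mult_ac)

lemma pair_zero_right [simp]: "pair phi 0 = 0"
  by (simp add: pair_def)

lemma pair_axis_right: "pair phi (axis i 1) = phi $ i"
  by (simp add: pair_def axis_def if_distrib cong: if_cong)

lemma pair_commute: "pair phi x = pair x phi"
  by (simp add: pair_def mult.commute)

lemma pair_axis_left: "pair (axis i 1) x = x $ i"
  by (simp add: pair_commute pair_axis_right)

lemma pair_vector_matrix_mult: "pair (x v* M) y = pair x (M *v y)"
  unfolding pair_def vector_matrix_mult_def matrix_vector_mult_def
  by (simp add: sum_distrib_left sum_distrib_right mult.assoc mult.left_commute) (rule sum.swap)

lemma exists_pair_nonzero:
  fixes phi :: "'a::field^'n"
  assumes "phi \<noteq> 0"
  shows "\<exists>u. pair phi u \<noteq> 0"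
  using assms by (metis pair_axis_right vec_eq_iff zero_index)

lemma tens_mult_vector: "tens d phi *v x = pair phi x *s d"
  by (simp add: vec_eq_iff tens_def matrix_vector_mult_def pair_def sum_distrib_left
      sum_distrib_right mult_ac)

lemma vector_mult_tens: "x v* tens d phi = pair x d *s phi"
  by (simp add: vec_eq_iff tens_def vector_matrix_mult_def pair_def sum_distrib_left
      sum_distrib_right mult_ac)

lemma matrix_mult_tens: "A ** tens d phi = tens (A *v d) phi"
  by (simp add: vec_eq_iff tens_def matrix_matrix_mult_def matrix_vector_mult_def
      sum_distrib_left sum_distrib_right mult_ac)

lemma tens_matrix_mult: "tens d phi ** B = tens d (phi v* B)"
  by (simp add: vec_eq_iff tens_def matrix_matrix_mult_def vector_matrix_mult_def
      sum_distrib_left sum_distrib_right mult_ac)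

lemma tens_mult_tens: "tens u v ** tens x y = tens (pair v x *s u) y"
  unfolding tens_matrix_mult vector_mult_tens by (simp add: tens_def vec_eq_iff mult_ac)

lemma tens_zero_left [simp]: "tens 0 phi = 0"
  by (simp add: tens_def vec_eq_iff)

lemma tens_eq_0_iff: "tens d phi = 0 \<longleftrightarrow> d = 0 \<or> phi = 0"
  by (auto simp: tens_def vec_eq_iff)

lemma matrix_add_rdistrib: "(B + C) ** A = B ** A + C ** A"
  by (vector matrix_matrix_mult_def sum.distrib[symmetric] field_simps)

lemma matrix_inv_eq:
  fixes A B :: "'a::field^'n^'n"
  assumes "A ** B = mat 1"
  shows "matrix_inv A = B"
proof -
  have "B ** A = mat 1"
    using assms matrix_left_right_inverse by blast
  then have "matrix_inv A ** A = mat 1"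
    unfolding matrix_inv_def using assms by (metis (mono_tags, lifting) someI)
  have "matrix_inv A = matrix_inv A ** (A ** B)"
    using assms by simp
  also have "\<dots> = B"
    by (simp add: matrix_mul_assoc \<open>matrix_inv A ** A = mat 1\<close>)
  finally show ?thesis .
qed

lemma invertible_matrix_inv:
  fixes A :: "'a::field^'n^'n"
  assumes "invertible A"
  shows matrix_inv_right: "A ** matrix_inv A = mat 1"
    and matrix_inv_left: "matrix_inv A ** A = mat 1"
  using assms matrix_inv_eq unfolding invertible_def by metis+

lemma matrix_inv_mult:
  fixes A B :: "'a::field^'n^'n"
  assumes "invertible A" "invertible B"
  shows "matrix_inv (A ** B) = matrix_inv B ** matrix_inv A"
proof (rule matrix_inv_eq)
  have "A ** B ** (matrix_inv B ** matrix_inv A) = A ** (B ** matrix_inv B) ** matrix_inv A"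
    by (simp add: matrix_mul_assoc)
  then show "A ** B ** (matrix_inv B ** matrix_inv A) = mat 1"
    using assms by (simp add: matrix_inv_right)
qed

lemma matrix_inv_1 [simp]: "matrix_inv (mat 1 :: 'a::field^'n^'n) = mat 1"
  by (rule matrix_inv_eq) simp

lemma SL_invertible: "A \<in> SL \<Longrightarrow> invertible A"
  by (simp add: SL_def invertible_det_nz)

lemma rank_one_update_inverse:
  fixes u v :: "'a::field^'n"
  assumes "1 + pair v u \<noteq> 0"
  shows "(mat 1 + tens u v) ** (mat 1 + tens (- inverse (1 + pair v u) *s u) v) = mat 1"
proof -
  define c where "c = - inverse (1 + pair v u)"
  have "1 + c + c * pair v u = 0"
    using assms by (simp add: c_def field_simps)
  moreover have "tens u v + tens (c *s u) v + tens (pair v (c *s u) *s u) v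
      = tens ((1 + c + c * pair v u) *s u) v"
    by (simp add: tens_def vec_eq_iff pair_scale_right algebra_simps)
  ultimately have "tens u v + tens (c *s u) v + tens (pair v (c *s u) *s u) v = 0"
    by (simp add: tens_eq_0_iff)
  then show ?thesis
    by (simp add: c_def matrix_add_ldistrib matrix_add_rdistrib tens_mult_tens add.assoc)
qed

lemma transvection_inverse:
  fixes u v :: "'a::field^'n"
  assumes "pair v u = 0"
  shows "matrix_inv (mat 1 + tens u v) = mat 1 + tens (- u) v"
proof (rule matrix_inv_eq)
  show "(mat 1 + tens u v) ** (mat 1 + tens (- u) v) = mat 1"
    using rank_one_update_inverse[of v u] assms by (simp add: vector_sneg_minus1[symmetric])
qed

lemma det_row_transvection:
  fixes w :: "'a::field^'n"
  assumes "w $ k = 0"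
  shows "det (mat 1 + tens (axis k 1) w) = 1"
proof -
  have "w = (\<Sum>j\<in>UNIV - {k}. w $ j *s axis j 1)"
    using assms basis_expansion[of w] by (simp add: sum.remove[of UNIV k])
  also have "\<dots> \<in> vec.span {row j (mat 1 :: 'a^'n^'n) |j. j \<noteq> k}"
    by (intro vec.span_sum vec.span_scale vec.span_base)
      (auto simp: row_def mat_def axis_def vec_eq_iff)
  finally have "det (\<chi> i. if i = k then row k (mat 1) + w else row i (mat 1 :: 'a^'n^'n)) = 1"
    using det_row_span by fastforce
  moreover have "mat 1 + tens (axis k 1) w
      = (\<chi> i. if i = k then row k (mat 1) + w else row i (mat 1 :: 'a^'n^'n))"
    by (simp add: vec_eq_iff tens_def row_def mat_def axis_def)
  ultimately show ?thesis
    by simp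
qed

lemma det_transvection:
  fixes u v :: "'a::field^'n"
  assumes "pair v u = 0"
  shows "det (mat 1 + tens u v) = 1"
proof (cases "u = 0")
  case False
  then obtain k where "u $ k \<noteq> 0"
    by (metis vec_eq_iff zero_index)
  \<comment> \<open>P maps the k-th basis vector to u, so it conjugates the transvection into one
    that changes only the k-th row.\<close>
  define P where "P = mat 1 + tens (u - axis k 1) (axis k 1 :: 'a^'n)"
  have "invertible P"
    using rank_one_update_inverse[of "axis k 1" "u - axis k 1"] \<open>u $ k \<noteq> 0\<close>
    unfolding P_def invertible_right_inverse by (auto simp: pair_axis_left)
  then have "det P \<noteq> 0"
    by (simp add: invertible_det_nz)
  have P_axis: "P *v axis k 1 = u"
    by (simp add: P_def matrix_vector_mult_add_rdistrib tens_mult_vector pair_axis_left)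
  define w where "w = v v* P"
  have "w $ k = 0"
    using assms by (simp add: w_def flip: pair_axis_right) (simp add: pair_vector_matrix_mult P_axis)
  have "(mat 1 + tens u v) ** P = P ** (mat 1 + tens (axis k 1) w)"
    by (simp add: matrix_add_ldistrib matrix_add_rdistrib tens_matrix_mult matrix_mult_tens
        P_axis w_def)
  then have "det (mat 1 + tens u v) * det P = det P * det (mat 1 + tens (axis k 1) w)"
    by (metis det_mul)
  then show ?thesis
    using det_row_transvection[OF \<open>w $ k = 0\<close>] \<open>det P \<noteq> 0\<close> by simp
qed simp

lemma transvection_in_SL: "pair v u = 0 \<Longrightarrow> mat 1 + tens u v \<in> SL"
  by (simp add: SL_def det_transvection)

lemma conjugate_tens:
  fixes g h :: "'a::field^'n^'n"
  shows "g ** tens d phi ** h = tens (g *v d) (phi v* h)"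
  by (simp add: matrix_mult_tens tens_matrix_mult)

lemma conjugate_transvection:
  fixes g h :: "'a::field^'n^'n"
  assumes "g ** h = mat 1"
  shows "g ** (mat 1 + tens d phi) ** h = mat 1 + tens (g *v d) (phi v* h)"
  using assms by (simp add: matrix_add_ldistrib matrix_add_rdistrib conjugate_tens)

lemma transv_rep_conjugate:
  fixes g :: "'a::field^'n^'n"
  assumes "invertible g" "transv_rep r d phi"
  shows "transv_rep (g ** r ** matrix_inv g) (g *v d) (phi v* matrix_inv g)"
proof -
  have "matrix_inv g *v (g *v d) = d"
    using assms by (simp add: matrix_vector_mul_assoc matrix_inv_left)
  then have "g *v d \<noteq> 0"
    using assms by (auto simp: transv_rep_def)
  have "(phi v* matrix_inv g) v* g = phi"
    using assms by (simp add: vector_matrix_mul_assoc matrix_inv_left)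
  then have "phi v* matrix_inv g \<noteq> 0"
    using assms by (auto simp: transv_rep_def)
  have "pair (phi v* matrix_inv g) (g *v d) = 0"
    using assms by (simp add: transv_rep_def pair_vector_matrix_mult matrix_vector_mul_assoc
        matrix_inv_left)
  then show ?thesis
    using assms \<open>g *v d \<noteq> 0\<close> \<open>phi v* matrix_inv g \<noteq> 0\<close>
    by (simp add: transv_rep_def conjugate_transvection matrix_inv_right)
qed

lemma transv_rep_neq_1: "transv_rep r d phi \<Longrightarrow> r \<noteq> mat 1"
  by (auto simp: transv_rep_def tens_eq_0_iff)

text \<open>Since (s - 1)(r - 1) = phi2(d1) d2 \<otimes> phi1, an edge is witnessed by any pair of
  representatives.\<close>

lemma tedge_iff:
  fixes d1 phi1 :: "'a::field^'n"
  assumes r: "transv_rep r d1 phi1" and s: "transv_rep s d2 phi2"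
  shows "tedge r s \<longleftrightarrow> pair phi2 d1 \<noteq> 0"
proof -
  have product: "pair phi2' d1' \<noteq> 0 \<longleftrightarrow> (s - mat 1) ** (r - mat 1) \<noteq> 0"
    if "transv_rep r d1' phi1'" "transv_rep s d2' phi2'" for d1' phi1' d2' phi2'
    using that by (auto simp: transv_rep_def tens_mult_tens tens_eq_0_iff)
  show ?thesis
  proof
    assume "tedge r s"
    then obtain d1' phi1' d2' phi2' where
      "transv_rep r d1' phi1'" "transv_rep s d2' phi2'" "pair phi2' d1' \<noteq> 0"
      unfolding tedge_def by blast
    then show "pair phi2 d1 \<noteq> 0"
      using product product[OF r s] by simp
  qed (use r s in \<open>auto simp: tedge_def\<close>)
qed

lemma not_tedge_self:
  assumes "transv_rep r d phi"
  shows "\<not> tedge r r"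
  using tedge_iff[OF assms assms] assms by (simp add: transv_rep_def)

section \<open>Conjugates by short products of generators\<close>

definition products :: "('a::field^'n^'n) set \<Rightarrow> nat \<Rightarrow> ('a^'n^'n) set" where
  "products X k = {listprod xs | xs. length xs = k \<and> set xs \<subseteq> X}"

lemma listprod_Nil [simp]: "listprod [] = mat 1"
  by (simp add: listprod_def)

lemma listprod_Cons [simp]: "listprod (x # xs) = x ** listprod xs"
  by (simp add: listprod_def)

lemma listprod_append: "listprod (xs @ ys) = listprod xs ** listprod ys"
  by (induction xs) (simp_all add: matrix_mul_assoc)

lemma listprod_SL: "set xs \<subseteq> SL \<Longrightarrow> listprod xs \<in> SL"
  by (induction xs) (simp_all add: SL_def det_mul)

lemma matrix_inv_listprod:
  "set xs \<subseteq> SL \<Longrightarrow> matrix_inv (listprod xs) = listprod (rev (map matrix_inv xs))"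
proof (induction xs)
  case (Cons x xs)
  then have "invertible x" "invertible (listprod xs)"
    by (simp_all add: SL_invertible listprod_SL)
  then show ?case
    using Cons by (simp add: matrix_inv_mult listprod_append)
qed simp

lemma products_0: "products X 0 = {mat 1}"
  by (auto simp: products_def)

lemma products_Suc: "products X (Suc k) = {x ** g | x g. x \<in> X \<and> g \<in> products X k}"
proof safe
  fix h assume "h \<in> products X (Suc k)"
  then obtain xs where xs: "h = listprod xs" "length xs = Suc k" "set xs \<subseteq> X"
    by (auto simp: products_def)
  then obtain x ys where "xs = x # ys"
    by (cases xs) auto
  then show "\<exists>x g. h = x ** g \<and> x \<in> X \<and> g \<in> products X k"
    using xs by (auto simp: products_def)
next
  fix x g assume "x \<in> X" "g \<in> products X k"
  then obtain xs where "g = listprod xs" "length xs = k" "set xs \<subseteq> X"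
    by (auto simp: products_def)
  then have "x ** g = listprod (x # xs)" "length (x # xs) = Suc k" "set (x # xs) \<subseteq> X"
    using \<open>x \<in> X\<close> by auto
  then show "x ** g \<in> products X (Suc k)"
    unfolding products_def by blast
qed

lemma products_mono: "mat 1 \<in> X \<Longrightarrow> products X k \<subseteq> products X (Suc k)"
  by (auto simp: products_Suc intro: exI[of _ "mat 1"])

lemma mat_1_in_products: "mat 1 \<in> X \<Longrightarrow> mat 1 \<in> products X k"
  using lift_Suc_mono_le[of "products X" 0 k, OF products_mono] by (simp add: products_0)

lemma products_SL: "X \<subseteq> SL \<Longrightarrow> products X k \<subseteq> SL"
  by (auto simp: products_def intro: listprod_SL)

lemma conjugate_by_product_mem:
  assumes "h \<in> products X k"
  shows "h ** (mat 1 + tens d phi) ** matrix_inv h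
    \<in> {listprod xs ** (mat 1 + tens (c *s d) phi) ** matrix_inv (listprod xs) | xs c.
        length xs = k \<and> set xs \<subseteq> X}"
proof -
  obtain xs where "h = listprod xs" "length xs = k" "set xs \<subseteq> X"
    using assms by (auto simp: products_def)
  then show ?thesis
    by (intro CollectI exI[of _ xs] exI[of _ 1]) simp
qed

lemma exists_stable_span:
  fixes S :: "nat \<Rightarrow> ('a::field^'m) set"
  assumes mono: "\<And>k. S k \<subseteq> S (Suc k)"
  shows "\<exists>k\<le>CARD('m). vec.span (S k) = vec.span (S (Suc k))"
proof (rule ccontr)
  assume growing: "\<not> ?thesis"
  have "k \<le> vec.dim (S k)" if "k \<le> Suc CARD('m)" for k
    using that
  proof (induction k)
    case (Suc k)
    then have "vec.span (S k) \<subset> vec.span (S (Suc k))"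
      using growing mono vec.span_mono by (metis Suc_le_mono psubsetI)
    then have "vec.dim (S k) < vec.dim (S (Suc k))"
      by (rule vec.dim_psubset)
    then show ?case
      using Suc.IH[OF Suc_leD[OF Suc.prems]] by simp
  qed simp
  then show False
    using dim_subset_UNIV_cart_gen[of "S (Suc CARD('m))"] by (metis le_refl not_less_eq_eq)
qed

lemma span_iterates_stabilize:
  fixes S :: "nat \<Rightarrow> ('a::field^'m) set"
  assumes mono: "\<And>k. S k \<subseteq> S (Suc k)"
    and step: "\<And>k. S (Suc k) = (\<Union>x\<in>Z. T x ` S k)"
    and linear: "\<And>x. x \<in> Z \<Longrightarrow> Vector_Spaces.linear (*s) (*s) (T x)"
  shows "S j \<subseteq> vec.span (S CARD('m))"
proof -
  obtain k where k: "k \<le> CARD('m)" "vec.span (S k) = vec.span (S (Suc k))"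
    using exists_stable_span mono by blast
  have after_k: "S (k + i) \<subseteq> vec.span (S k)" for i
  proof (induction i)
    case (Suc i)
    have "S (k + Suc i) = (\<Union>x\<in>Z. T x ` S (k + i))"
      using step by simp
    also have "\<dots> \<subseteq> (\<Union>x\<in>Z. T x ` vec.span (S k))"
      using Suc.IH by blast
    also have "\<dots> = (\<Union>x\<in>Z. vec.span (T x ` S k))"
      using vec.linear_span_image[OF linear] by simp
    also have "\<dots> \<subseteq> vec.span (S (Suc k))"
      using step by (intro UN_least vec.span_mono) auto
    finally show ?case
      using k(2) by simp
  qed (simp add: vec.span_superset)
  have S_mono: "S i \<subseteq> S i'" if "i \<le> i'" for i i'
    using lift_Suc_mono_le[of S, OF mono that] .
  have "S j \<subseteq> vec.span (S k)"
  proof (cases "j \<le> k")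
    case True
    then show ?thesis
      using S_mono vec.span_superset by blast
  next
    case False
    then show ?thesis
      using after_k[of "j - k"] by simp
  qed
  also have "\<dots> \<subseteq> vec.span (S CARD('m))"
    using S_mono[OF k(1)] by (rule vec.span_mono)
  finally show ?thesis .
qed

lemma exists_pair_nonzero_in_spanning_set:
  assumes "x \<in> vec.span S" "pair L x \<noteq> 0"
  shows "\<exists>s\<in>S. pair L s \<noteq> 0"
proof (rule ccontr)
  assume "\<not> ?thesis"
  then have "S \<subseteq> {x. pair L x = 0}"
    by auto
  moreover have "vec.subspace {x. pair L x = 0}"
    by (simp add: vec.subspace_def pair_add_right pair_scale_right)
  ultimately have "vec.span S \<subseteq> {x. pair L x = 0}"
    by (rule vec.span_minimal)
  then show False
    using assms by auto
qed

text \<open>Matrices are flattened to vectors indexed by pairs, so that the dimension theory of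
  vec applies to them; sandwich is the map M \<mapsto> x M y in these coordinates.\<close>

definition entries :: "'a^'n^'m \<Rightarrow> 'a^('m \<times> 'n)" where
  "entries M = (\<chi> p. M $ fst p $ snd p)"

definition sandwich :: "'a::field^'n^'n \<Rightarrow> 'a^'n^'n \<Rightarrow> 'a^('n \<times> 'n) \<Rightarrow> 'a^('n \<times> 'n)" where
  "sandwich x y u = (\<chi> p. \<Sum>k\<in>UNIV. \<Sum>l\<in>UNIV. x $ fst p $ k * u $ (k, l) * y $ l $ snd p)"

definition outer :: "'a::field^'m \<Rightarrow> 'a^'n \<Rightarrow> 'a^('m \<times> 'n)" where
  "outer b a = (\<chi> p. b $ fst p * a $ snd p)"

lemma entries_sandwich: "entries (x ** M ** y) = sandwich x y (entries M)"
  unfolding entries_def sandwich_def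
  by (simp add: vec_eq_iff matrix_matrix_mult_def sum_distrib_right sum_distrib_left mult_ac)
    (intro allI sum.swap)

lemma linear_sandwich: "Vector_Spaces.linear (*s) (*s) (sandwich x y)"
  unfolding Vector_Spaces.linear_iff
  by (auto intro!: vec.vector_space_axioms
      simp: sandwich_def vec_eq_iff sum.distrib sum_distrib_left distrib_left distrib_right mult_ac)

lemma pair_outer_entries: "pair (outer b a) (entries M) = pair b (M *v a)"
proof -
  have "pair b (M *v a) = (\<Sum>i\<in>UNIV. \<Sum>j\<in>UNIV. b $ i * a $ j * M $ i $ j)"
    by (simp add: pair_def matrix_vector_mult_def sum_distrib_left mult_ac)
  also have "\<dots> = pair (outer b a) (entries M)"
    by (simp add: pair_def outer_def entries_def sum.cartesian_product split_def UNIV_Times_UNIV)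
  finally show ?thesis ..
qed

locale symmetric_generating_set =
  fixes X :: "('a::field^'n^'n) set"
  assumes subset_SL: "X \<subseteq> SL"
    and matrix_inv_mem: "\<And>x. x \<in> X \<Longrightarrow> matrix_inv x \<in> X"
    and one_mem: "mat 1 \<in> X"
    and generates: "gen_subgroup X = SL"
begin

lemma SL_subset_products:
  assumes "g \<in> SL"
  shows "\<exists>k. g \<in> products X k"
proof -
  have "g \<in> gen_subgroup X"
    using assms generates by simp
  then show ?thesis
  proof (induction rule: gen_subgroup.induct)
    case one
    then show ?case
      using products_0 by blast
  next
    case (gen x)
    then show ?case
      using products_Suc[of X 0] products_0 by force
  next
    case (mult a b)
    then obtain xs ys where "a = listprod xs" "set xs \<subseteq> X" "b = listprod ys" "set ys \<subseteq> X"
      by (auto simp: products_def)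
    then have "a ** b = listprod (xs @ ys)" "set (xs @ ys) \<subseteq> X"
      by (auto simp: listprod_append)
    then show ?case
      unfolding products_def by blast
  next
    case (inv a)
    then obtain xs where "a = listprod xs" "set xs \<subseteq> X"
      by (auto simp: products_def)
    moreover have "set xs \<subseteq> SL"
      using \<open>set xs \<subseteq> X\<close> subset_SL by blast
    ultimately have "matrix_inv a = listprod (rev (map matrix_inv xs))"
      "set (rev (map matrix_inv xs)) \<subseteq> X"
      using matrix_inv_listprod matrix_inv_mem by auto
    then show ?case
      unfolding products_def by blast
  qed
qed

text \<open>Conjugation by a generator maps the conjugates by products of length k linearly onto
  those by products of length k + 1, so the spans of these sets stabilise after n^2 steps.\<close>

lemma conjugate_in_span_short_conjugates:
  assumes "g \<in> SL"
  shows "entries (g ** N ** matrix_inv g)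
    \<in> vec.span ((\<lambda>h. entries (h ** N ** matrix_inv h)) ` products X (CARD('n)^2))"
proof -
  define S where "S k = (\<lambda>h. entries (h ** N ** matrix_inv h)) ` products X k" for k
  have conjugate_Suc: "entries ((x ** h) ** N ** matrix_inv (x ** h))
      = sandwich x (matrix_inv x) (entries (h ** N ** matrix_inv h))"
    if "x \<in> X" "h \<in> products X k" for x h k
  proof -
    have "invertible x" "invertible h"
      using that subset_SL products_SL[OF subset_SL] by (auto intro: SL_invertible)
    then have "(x ** h) ** N ** matrix_inv (x ** h) = x ** (h ** N ** matrix_inv h) ** matrix_inv x"
      by (simp add: matrix_inv_mult matrix_mul_assoc)
    then show ?thesis
      by (simp add: entries_sandwich)
  qed
  have "S j \<subseteq> vec.span (S CARD('n \<times> 'n))" for j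
  proof (rule span_iterates_stabilize)
    show "S k \<subseteq> S (Suc k)" for k
      unfolding S_def using products_mono[OF one_mem] by (rule image_mono)
    show "S (Suc k) = (\<Union>x\<in>X. sandwich x (matrix_inv x) ` S k)" for k
    proof -
      have "S (Suc k)
          = (\<Union>x\<in>X. (\<lambda>h. entries ((x ** h) ** N ** matrix_inv (x ** h))) ` products X k)"
        unfolding S_def products_Suc by blast
      also have "\<dots> = (\<Union>x\<in>X. sandwich x (matrix_inv x) ` S k)"
        unfolding S_def image_image using conjugate_Suc by (auto intro!: SUP_cong image_cong)
      finally show ?thesis .
    qed
  qed (rule linear_sandwich)
  moreover obtain j where "g \<in> products X j"
    using SL_subset_products assms by blast
  ultimately show ?thesis
    unfolding S_def by (auto simp: power2_eq_square)
qed

lemma exists_short_conjugate: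
  assumes "g \<in> SL" "pair L (entries (g ** N ** matrix_inv g)) \<noteq> 0"
  shows "\<exists>h\<in>products X (CARD('n)^2). pair L (entries (h ** N ** matrix_inv h)) \<noteq> 0"
  using exists_pair_nonzero_in_spanning_set[OF conjugate_in_span_short_conjugates[OF assms(1)] assms(2)]
  by blast

end

section \<open>Transvections making the cycle expressions non-zero\<close>

lemma transvection_mult_vector: "(mat 1 + tens u w) *v x = x + pair w x *s u"
  by (simp add: matrix_vector_mult_add_rdistrib tens_mult_vector)

lemma vector_mult_transvection_inverse:
  fixes u w :: "'a::field^'n"
  assumes "pair w u = 0"
  shows "phi v* matrix_inv (mat 1 + tens u w) = phi - pair phi u *s w"
  using assms by (simp add: transvection_inverse vector_matrix_mult_add_rdistrib vector_mult_tens
      pair_minus_right vector_sneg_minus1[symmetric])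

lemma pair_conjugate_tens_mult_vector:
  fixes h :: "'a::field^'n^'n"
  shows "pair b ((h ** tens d phi ** matrix_inv h) *v a)
    = pair (phi v* matrix_inv h) a * pair b (h *v d)"
  by (simp add: conjugate_tens tens_mult_vector pair_scale_right)

lemma exists_functional_on_independent:
  fixes S :: "('a::field^'n) set"
  assumes "vec.independent S"
  shows "\<exists>e. \<forall>x\<in>S. pair e x = f x"
proof -
  fix i :: 'n
  obtain G where G: "Vector_Spaces.linear (*s) (*s) G" "\<forall>x\<in>S. G x = f x *s (axis i 1 :: 'a^'n)"
    using vec.linear_independent_extend[OF assms, of "\<lambda>x. f x *s axis i 1"] by blast
  have "pair (\<chi> j. G (axis j 1) $ i) x = G x $ i" for x
    using linear_componentwise[OF G(1), of x i] by (simp add: pair_def mult_ac)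
  then have "\<forall>x\<in>S. pair (\<chi> j. G (axis j 1) $ i) x = f x"
    using G(2) by simp
  then show ?thesis ..
qed

lemma independent_pair_by_functional:
  fixes x y :: "'a::field^'n"
  assumes "x \<noteq> 0" "pair phi x = 0" "pair phi y \<noteq> 0"
  shows "vec.independent {x, y}"
proof (rule vec.independent_insertI)
  show "x \<notin> vec.span {y}"
  proof
    assume "x \<in> vec.span {y}"
    then obtain c where "x = c *s y"
      by (auto simp: vec.span_singleton)
    then show False
      using assms by (simp add: pair_scale_right)
  qed
  show "vec.independent {y}"
    using assms by (auto simp: vec.independent_insert)
qed

lemma exists_not_in_span_of_two:
  fixes x y :: "'a::field^'n"
  assumes "CARD('n) \<ge> 3"
  shows "\<exists>c. c \<notin> vec.span {x, y}"
proof (rule ccontr)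
  assume "\<not> ?thesis"
  then have "CARD('n) \<le> card {x, y}"
    using vec.dim_le_card[of UNIV "{x, y}"] by (auto simp: card_cart_basis)
  also have "\<dots> \<le> 2"
    by (simp add: card_insert_le_m1)
  finally show False
    using assms by simp
qed

lemma exists_outside_subspace_and_kernel:
  assumes "vec.subspace P" "c \<notin> P" "pair phi u \<noteq> 0"
  shows "\<exists>c'. c' \<notin> P \<and> pair phi c' \<noteq> 0"
proof (cases "pair phi c = 0 \<and> u \<in> P")
  case True
  then have "c + u \<notin> P"
    using assms by (metis add_diff_cancel_right' vec.subspace_diff)
  then show ?thesis
    using True assms by (auto simp: pair_add_right)
qed (use assms in auto)

lemma exists_SL_mutually_adjacent:
  fixes d phi :: "'a::field^'n"
  assumes "d \<noteq> 0" "phi \<noteq> 0" "pair phi d = 0"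
  shows "\<exists>g\<in>SL. pair (phi v* matrix_inv g) d \<noteq> 0 \<and> pair phi (g *v d) \<noteq> 0"
proof -
  obtain u where "pair phi u \<noteq> 0"
    using exists_pair_nonzero assms by blast
  then have "vec.independent {d, u}" "d \<noteq> u"
    using assms independent_pair_by_functional by auto
  then obtain w where "pair w d = 1" "pair w u = 0"
    using exists_functional_on_independent[of "{d, u}" "\<lambda>x. if x = d then 1 else 0"] by force
  \<comment> \<open>For g = 1 + u \<otimes> w the two values are -phi(u) and phi(u).\<close>
  then show ?thesis
    using \<open>pair phi u \<noteq> 0\<close> assms
    by (intro bexI[of _ "mat 1 + tens u w"])
      (simp_all add: transvection_in_SL transvection_mult_vector vector_mult_transvection_inverse
        pair_add_right pair_diff_left pair_scale_left pair_scale_right)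
qed

text \<open>The transvection g = 1 + c \<otimes> e is chosen so that the expression below collapses
  to -phi(c): this needs e(c) = 0, e(d) = 1 and e(p) = 1 for the vector p defined below,
  which is possible as c, d, p are independent.\<close>

lemma exists_SL_nonsingular_triangle:
  fixes d phi a b :: "'a::field^'n"
  assumes "CARD('n) \<ge> 3" "d \<noteq> 0" "pair phi d = 0" "pair b d \<noteq> 0" "pair phi a \<noteq> 0"
  shows "\<exists>g\<in>SL. pair phi a * pair b (g *v d) * pair (phi v* matrix_inv g) d
    + pair b d * pair (phi v* matrix_inv g) a * pair phi (g *v d) \<noteq> 0"
proof -
  define P where "P = vec.span {d, a}"
  obtain c0 where "c0 \<notin> P"
    using exists_not_in_span_of_two[OF assms(1)] unfolding P_def by blast
  then obtain c where c: "c \<notin> P" "pair phi c \<noteq> 0"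
    using exists_outside_subspace_and_kernel[OF _ _ assms(5)] unfolding P_def
    by (meson vec.subspace_span)
  define p where "p = (pair phi a * pair b c) *s d + (pair b d * pair phi c) *s a"
  have "d \<in> P" "a \<in> P"
    unfolding P_def by (simp_all add: vec.span_base)
  then have "p \<in> P"
    unfolding p_def P_def by (simp add: vec.span_add vec.span_scale)
  have "vec.span {d, p} \<subseteq> P"
    using \<open>d \<in> P\<close> \<open>p \<in> P\<close> unfolding P_def by (simp add: vec.span_minimal vec.subspace_span)
  then have "c \<notin> vec.span {d, p}"
    using c(1) by blast
  moreover have "vec.independent {d, p}"
    using assms c by (intro independent_pair_by_functional[where phi = phi])
      (simp_all add: p_def pair_add_right pair_scale_right)
  ultimately have "vec.independent {c, d, p}"
    by (rule vec.independent_insertI)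
  moreover have "c \<noteq> d" "c \<noteq> p"
    using c(1) \<open>p \<in> P\<close> \<open>d \<in> P\<close> by auto
  ultimately obtain e where e: "pair e c = 0" "pair e d = 1" "pair e p = 1"
    using exists_functional_on_independent[of "{c, d, p}" "\<lambda>x. if x = c then 0 else 1"] by force
  define g where "g = mat 1 + tens c e"
  have gd: "g *v d = d + c"
    using e(2) by (simp add: g_def transvection_mult_vector)
  have phi_g: "phi v* matrix_inv g = phi - pair phi c *s e"
    using e(1) by (simp add: g_def vector_mult_transvection_inverse)
  have "pair phi a * pair b (g *v d) * pair (phi v* matrix_inv g) d
      + pair b d * pair (phi v* matrix_inv g) a * pair phi (g *v d)
    = pair phi a * (pair b d + pair b c) * (- pair phi c)
      + pair b d * (pair phi a - pair phi c * pair e a) * pair phi c"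
    using assms(3) e(2) by (simp add: gd phi_g pair_add_right pair_diff_left pair_scale_left)
  also have "\<dots> = - pair phi c * pair e p"
    using e(2) by (simp add: p_def pair_add_right pair_scale_right algebra_simps)
  finally show ?thesis
    using c(2) e(1,3) by (intro bexI[of _ g]) (simp_all add: g_def transvection_in_SL)
qed

context symmetric_generating_set
begin

lemma transv_rep_conjugate_by_product:
  assumes "h \<in> products X k" "transv_rep r d phi"
  shows "transv_rep (h ** r ** matrix_inv h) (h *v d) (phi v* matrix_inv h)"
  using assms products_SL[OF subset_SL] by (blast intro: transv_rep_conjugate SL_invertible)

lemma exists_short_product_mutually_adjacent:
  fixes d phi :: "'a^'n"
  assumes "d \<noteq> 0" "phi \<noteq> 0" "pair phi d = 0"
  shows "\<exists>h\<in>products X (CARD('n)^2). pair (phi v* matrix_inv h) d \<noteq> 0 \<and> pair phi (h *v d) \<noteq> 0"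
proof -
  obtain g where "g \<in> SL" "pair (phi v* matrix_inv g) d \<noteq> 0" "pair phi (g *v d) \<noteq> 0"
    using exists_SL_mutually_adjacent[OF assms] by blast
  then show ?thesis
    using exists_short_conjugate[of g "outer phi d" "tens d phi"]
    by (simp add: pair_outer_entries pair_conjugate_tens_mult_vector)
qed

lemma exists_short_product_nonsingular_triangle:
  fixes d phi a b :: "'a^'n"
  assumes "CARD('n) \<ge> 3" "d \<noteq> 0" "pair phi d = 0" "pair b d \<noteq> 0" "pair phi a \<noteq> 0"
  shows "\<exists>h\<in>products X (CARD('n)^2). pair phi a * pair b (h *v d) * pair (phi v* matrix_inv h) d
    + pair b d * pair (phi v* matrix_inv h) a * pair phi (h *v d) \<noteq> 0"
proof -
  define L where "L = pair phi a *s outer b d + pair b d *s outer phi a"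
  have L_conjugate: "pair L (entries (h ** tens d phi ** matrix_inv h))
    = pair phi a * pair b (h *v d) * pair (phi v* matrix_inv h) d
      + pair b d * pair (phi v* matrix_inv h) a * pair phi (h *v d)" for h
    by (simp add: L_def pair_add_left pair_scale_left pair_outer_entries
        pair_conjugate_tens_mult_vector mult_ac)
  obtain g where "g \<in> SL" "pair L (entries (g ** tens d phi ** matrix_inv g)) \<noteq> 0"
    using exists_SL_nonsingular_triangle[OF assms] unfolding L_conjugate by blast
  then show ?thesis
    using exists_short_conjugate[of g L "tens d phi"] unfolding L_conjugate by blast
qed

end

section \<open>Non-singular triangles\<close>

definition nonsingular_chordless_cycle ::
  "('a::field^'n^'n) set \<Rightarrow> nat \<Rightarrow> (nat \<Rightarrow> 'a^'n^'n) \<Rightarrow>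
    (nat \<Rightarrow> 'a^'n) \<Rightarrow> (nat \<Rightarrow> 'a^'n) \<Rightarrow> bool"
  where
  "nonsingular_chordless_cycle Y k r v \<psi> \<longleftrightarrow>
    k \<ge> 3 \<and> inj_on r {..<k} \<and>
    (\<forall>i<k. r i \<in> Y \<and> transv_rep (r i) (v i) (\<psi> i)) \<and>
    (\<forall>i<k. \<forall>j<k. i \<noteq> j \<longrightarrow>
      (tedge (r i) (r j) \<longleftrightarrow> (j = Suc i mod k \<or> i = Suc j mod k))) \<and>
    (\<Prod>i<k. pair (\<psi> i) (v (Suc i mod k))) +
      (-1)^(k-1) * (\<Prod>i<k. pair (\<psi> (Suc i mod k)) (v i)) \<noteq> 0"

lemma nonsingular_triangle:
  assumes reps: "transv_rep r0 v0 \<psi>0" "transv_rep r1 v1 \<psi>1" "transv_rep r2 v2 \<psi>2"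
    and in_Y: "r0 \<in> Y" "r1 \<in> Y" "r2 \<in> Y"
    and two_way: "\<And>r s. r \<in> Y \<Longrightarrow> s \<in> Y \<Longrightarrow> tedge r s \<Longrightarrow> tedge s r"
    and nonsingular:
      "pair \<psi>0 v1 * pair \<psi>1 v2 * pair \<psi>2 v0 + pair \<psi>1 v0 * pair \<psi>2 v1 * pair \<psi>0 v2 \<noteq> 0"
  shows "nonsingular_chordless_cycle Y 3 ((!) [r0, r1, r2]) ((!) [v0, v1, v2]) ((!) [\<psi>0, \<psi>1, \<psi>2])"
proof -
  have edges: "tedge r0 r1 \<and> tedge r1 r0 \<and> tedge r0 r2 \<and> tedge r2 r0 \<and> tedge r1 r2 \<and> tedge r2 r1"
  proof (cases "pair \<psi>0 v1 * pair \<psi>1 v2 * pair \<psi>2 v0 = 0")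
    case True
    then have "pair \<psi>1 v0 * pair \<psi>2 v1 * pair \<psi>0 v2 \<noteq> 0"
      using nonsingular unfolding True by simp
    then have "tedge r0 r1" "tedge r1 r2" "tedge r2 r0"
      using reps by (simp_all add: tedge_iff)
    then show ?thesis
      using two_way in_Y by blast
  next
    case False
    then have "tedge r1 r0" "tedge r2 r1" "tedge r0 r2"
      using reps by (simp_all add: tedge_iff)
    then show ?thesis
      using two_way in_Y by blast
  qed
  moreover have "\<not> tedge r0 r0" "\<not> tedge r1 r1"
    using reps by (simp_all add: not_tedge_self)
  ultimately have "r0 \<noteq> r1" "r0 \<noteq> r2" "r1 \<noteq> r2"
    by auto
  moreover have "{..<3::nat} = {0, 1, 2}" "(\<forall>i<3::nat. P i) \<longleftrightarrow> P 0 \<and> P 1 \<and> P 2"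
    "(\<Prod>i<3::nat. f i) = f 0 * f 1 * f 2" for P and f :: "nat \<Rightarrow> 'a"
    by (auto simp: numeral_3_eq_3 numeral_2_eq_2 less_Suc_eq mult_ac)
  ultimately show ?thesis
    unfolding nonsingular_chordless_cycle_def
    using edges reps in_Y nonsingular by (simp add: mult_ac)
qed

theorem lemma4p6:
  fixes X :: "('a::field ^'n ^'n) set" and d phi :: "'a ^'n"
  assumes n3: "CARD('n) \<ge> 3"
    and XSL: "X \<subseteq> SL"
    and Xsym: "\<And>x. x \<in> X \<Longrightarrow> matrix_inv x \<in> X"
    and X1: "mat 1 \<in> X"
    and Xgen: "gen_subgroup X = SL"
    and trep: "d \<noteq> 0" "phi \<noteq> 0" "pair phi d = 0"
    and tK: "\<And>c. mat 1 + tens (c *s d) phi \<in> X"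
    and Y1: "Y1 = {listprod xs ** (mat 1 + tens (c *s d) phi) ** matrix_inv (listprod xs) | xs c.
                    length xs = CARD('n)^2 \<and> set xs \<subseteq> X}"
    and twoway: "\<And>r s. r \<in> Y1 - {mat 1} \<Longrightarrow> s \<in> Y1 - {mat 1} \<Longrightarrow> tedge r s \<Longrightarrow> tedge s r"
  shows "\<exists>k::nat. \<exists>r :: nat \<Rightarrow> 'a ^'n ^'n. \<exists>v \<psi> :: nat \<Rightarrow> 'a ^'n.
           k \<ge> 3 \<and> inj_on r {..<k} \<and>
           (\<forall>i<k. r i \<in> Y1 - {mat 1} \<and> transv_rep (r i) (v i) (\<psi> i)) \<and>
           (\<forall>i<k. \<forall>j<k. i \<noteq> j \<longrightarrow>
              (tedge (r i) (r j) \<longleftrightarrow> (j = Suc i mod k \<or> i = Suc j mod k))) \<and>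
           (\<Prod>i<k. pair (\<psi> i) (v (Suc i mod k))) +
             (-1)^(k-1) * (\<Prod>i<k. pair (\<psi> (Suc i mod k)) (v i)) \<noteq> 0"
proof -
  interpret symmetric_generating_set X
    using XSL Xsym X1 Xgen by unfold_locales
  let ?t = "mat 1 + tens d phi"
  have t_rep: "transv_rep ?t d phi"
    using trep by (simp add: transv_rep_def)
  have in_Y1: "h ** ?t ** matrix_inv h \<in> Y1 - {mat 1}" if "h \<in> products X (CARD('n)^2)" for h
    using conjugate_by_product_mem[OF that]
      transv_rep_neq_1[OF transv_rep_conjugate_by_product[OF that t_rep]]
    unfolding Y1 by simp
  have t_in_Y1: "?t \<in> Y1 - {mat 1}"
    using in_Y1[OF mat_1_in_products[OF one_mem]] by simp
  obtain h1 where h1: "h1 \<in> products X (CARD('n)^2)"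
    "pair (phi v* matrix_inv h1) d \<noteq> 0" "pair phi (h1 *v d) \<noteq> 0"
    using exists_short_product_mutually_adjacent[OF trep] by blast
  obtain h2 where h2: "h2 \<in> products X (CARD('n)^2)"
    "pair phi (h1 *v d) * pair (phi v* matrix_inv h1) (h2 *v d) * pair (phi v* matrix_inv h2) d
     + pair (phi v* matrix_inv h1) d * pair (phi v* matrix_inv h2) (h1 *v d) * pair phi (h2 *v d)
     \<noteq> 0"
    using exists_short_product_nonsingular_triangle[OF n3 trep(1,3) h1(2,3)] by blast
  from nonsingular_triangle[OF t_rep transv_rep_conjugate_by_product[OF h1(1) t_rep]
      transv_rep_conjugate_by_product[OF h2(1) t_rep] t_in_Y1 in_Y1[OF h1(1)] in_Y1[OF h2(1)]
      twoway h2(2)]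
  show ?thesis
    unfolding nonsingular_chordless_cycle_def by blast
qed

end
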